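(* Let $X$ be a real Hilbert space, let $\beta>\delta>0$, and let $T_1,T_2\colon X\to X$. Suppose $T_1$ is $\tfrac1\beta$-cocoercive and $T_2$ is $\tfrac1\delta$-cocoercive. Then $T_1-T_2$ is $\beta$-Lipschitz continuous.
   Context: For $\beta>0$, an operator $T\colon X\to X$ is $\tfrac1\beta$-cocoercive if there exists a nonexpansive $N\colon X\to X$ with $T=\tfrac\beta2(\mathrm{Id}+N)$ (equivalently, $\langle x-y,Tx-Ty\rangle\ge\tfrac1\beta\|Tx-Ty\|^2$ for all $x,y$). Nonexpansive means $1$-Lipschitz. *)

theory Defs
  imports "HOL-Analysis.Analysis"
begin

definition nonexpansive :: "('a::real_normed_vector \<Rightarrow> 'a) \<Rightarrow> bool" where
  "nonexpansive N \<longleftrightarrow> 1-lipschitz_on UNIV N"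

text \<open>T is (1/beta)-cocoercive iff T = (beta/2)(Id + N) for some nonexpansive N.
  The parameter passed is beta (the reciprocal of the cocoercivity constant).\<close>
definition cocoercive_inv :: "real \<Rightarrow> ('a::real_normed_vector \<Rightarrow> 'a) \<Rightarrow> bool" where
  "cocoercive_inv \<beta> T \<longleftrightarrow> (\<exists>N. nonexpansive N \<and> (\<forall>x. T x = (\<beta> / 2) *\<^sub>R (x + N x)))"

end

theory Submission
  imports Defs
begin

text \<open>Writing \<open>T\<^sub>1 = (\<beta>/2)(Id + N\<^sub>1)\<close> and \<open>T\<^sub>2 = (\<delta>/2)(Id + N\<^sub>2)\<close>, the difference is
  \<open>T\<^sub>1 - T\<^sub>2 = ((\<beta> - \<delta>)/2) Id + (\<beta>/2) N\<^sub>1 - (\<delta>/2) N\<^sub>2\<close>, a combination of 1-Lipschitz maps whose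
  nonnegative weights add up to \<open>\<beta>\<close>.\<close>

lemma cocoercive_inv_diff_eq:
  fixes N1 N2 :: "'a::real_vector \<Rightarrow> 'a"
  assumes "\<And>x. T1 x = (\<beta> / 2) *\<^sub>R (x + N1 x)" and "\<And>x. T2 x = (\<delta> / 2) *\<^sub>R (x + N2 x)"
  shows "T1 x - T2 x = ((\<beta> - \<delta>) / 2) *\<^sub>R x + (\<beta> / 2) *\<^sub>R N1 x - (\<delta> / 2) *\<^sub>R N2 x"
  by (simp add: assms algebra_simps diff_divide_distrib)

lemma lipschitz_on_cocoercive_inv_diff:
  fixes T1 T2 :: "'a::real_normed_vector \<Rightarrow> 'a"
  assumes "0 \<le> \<delta>" and "\<delta> \<le> \<beta>"
    and "cocoercive_inv \<beta> T1" and "cocoercive_inv \<delta> T2"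
  shows "\<beta>-lipschitz_on U (\<lambda>x. T1 x - T2 x)"
proof -
  obtain N1 where N1: "1-lipschitz_on UNIV N1" and T1: "\<And>x. T1 x = (\<beta> / 2) *\<^sub>R (x + N1 x)"
    using assms(3) by (auto simp: cocoercive_inv_def nonexpansive_def)
  obtain N2 where N2: "1-lipschitz_on UNIV N2" and T2: "\<And>x. T2 x = (\<delta> / 2) *\<^sub>R (x + N2 x)"
    using assms(4) by (auto simp: cocoercive_inv_def nonexpansive_def)
  have "((\<beta> - \<delta>) / 2 * 1 + \<beta> / 2 * 1 + \<delta> / 2 * 1)-lipschitz_on U
      (\<lambda>x. ((\<beta> - \<delta>) / 2) *\<^sub>R x + (\<beta> / 2) *\<^sub>R N1 x - (\<delta> / 2) *\<^sub>R N2 x)"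
    using assms(1,2) lipschitz_on_subset[OF N1, of U] lipschitz_on_subset[OF N2, of U]
    by (intro lipschitz_on_diff lipschitz_on_add lipschitz_on_cmult_nonneg lipschitz_on_id) auto
  moreover have "(\<beta> - \<delta>) / 2 * 1 + \<beta> / 2 * 1 + \<delta> / 2 * 1 = \<beta>"
    by (simp add: field_simps)
  ultimately show ?thesis
    by (simp add: cocoercive_inv_diff_eq[OF T1 T2])
qed

theorem mainTheorem3:
  fixes T1 T2 :: "'a::{real_inner, complete_space} \<Rightarrow> 'a"
    and \<beta> \<delta> :: real
  assumes "\<beta> > \<delta>" and "\<delta> > 0"
    and "cocoercive_inv \<beta> T1"
    and "cocoercive_inv \<delta> T2"
  shows "\<beta>-lipschitz_on UNIV (\<lambda>x. T1 x - T2 x)"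
  using assms by (intro lipschitz_on_cocoercive_inv_diff) auto

end
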